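(* Let $n>3$. Let $\mu_{1,1}^n$ be the complex commutative associative algebra with basis $e_1,\dots,e_n$ and only nonzero products $e_i\cdot e_j=e_{i+j}$ for $2\le i+j\le n-1$, and let $\mu_{1,2}^n$ be the one with only nonzero products $e_i\cdot e_j=e_{i+j}$ for $2\le i+j\le n-1$ and $e_n\cdot e_n=e_{n-1}$. Then: (1) if $(\mathcal{P},\cdot)=\mu_{1,1}^n$, then $Z^{2}(\mathcal{P},\mathcal{P})=\{\alpha\Delta_{1,n}(-,-)e_{n-1}+\beta\Delta_{1,n}(-,-)e_n:\alpha,\beta\in\mathbb{C}\}$; (2) if $(\mathcal{P},\cdot)=\mu_{1,2}^n$, then $Z^{2}(\mathcal{P},\mathcal{P})=\{\alpha\Delta_{1,n}(-,-)e_{n-1}:\alpha\in\mathbb{C}\}$.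
   Context: For a commutative associative algebra $(\mathcal{P},\cdot)$, $Z^{2}(\mathcal{P},\mathcal{P})$ is the set of all skew-symmetric bilinear maps $\theta:\mathcal{P}\times\mathcal{P}\to\mathcal{P}$ such that $\theta(\theta(x,y),z)+\theta(\theta(y,z),x)+\theta(\theta(z,x),y)=0$ and $\theta(x\cdot y,z)-\theta(x,z)\cdot y-x\cdot\theta(y,z)=0$ for all $x,y,z$. $\Delta_{1,n}$ denotes the skew-symmetric bilinear form with $\Delta_{1,n}(e_1,e_n)=1$, $\Delta_{1,n}(e_n,e_1)=-1$, and $\Delta_{1,n}(e_l,e_m)=0$ for all other pairs of basis vectors. *)

theory Defs
  imports Complex_Main
begin

text \<open>Vectors of the n-dimensional complex space with basis e_1,...,e_n are
  modelled as coordinate functions nat => complex supported on {1..n}.\<close>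

definition vecs :: "nat \<Rightarrow> (nat \<Rightarrow> complex) set" where
  "vecs n = {v. \<forall>i. i \<notin> {1..n} \<longrightarrow> v i = 0}"

definition bvec :: "nat \<Rightarrow> nat \<Rightarrow> complex" where
  "bvec i = (\<lambda>k. if k = i then 1 else 0)"

definition vadd :: "(nat \<Rightarrow> complex) \<Rightarrow> (nat \<Rightarrow> complex) \<Rightarrow> nat \<Rightarrow> complex" where
  "vadd x y = (\<lambda>k. x k + y k)"

definition vscale :: "complex \<Rightarrow> (nat \<Rightarrow> complex) \<Rightarrow> nat \<Rightarrow> complex" where
  "vscale a x = (\<lambda>k. a * x k)"

text \<open>An algebra structure given by the products of basis vectors
  m i j = e_i * e_j, extended bilinearly.\<close>

definition amult :: "(nat \<Rightarrow> nat \<Rightarrow> nat \<Rightarrow> complex) \<Rightarrow> nat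
    \<Rightarrow> (nat \<Rightarrow> complex) \<Rightarrow> (nat \<Rightarrow> complex) \<Rightarrow> nat \<Rightarrow> complex" where
  "amult m n x y = (\<lambda>k. \<Sum>i\<in>{1..n}. \<Sum>j\<in>{1..n}. x i * y j * m i j k)"

definition mu11 :: "nat \<Rightarrow> nat \<Rightarrow> nat \<Rightarrow> nat \<Rightarrow> complex" where
  "mu11 n i j = (if 2 \<le> i + j \<and> i + j \<le> n - 1 then bvec (i + j) else (\<lambda>k. 0))"

definition mu12 :: "nat \<Rightarrow> nat \<Rightarrow> nat \<Rightarrow> nat \<Rightarrow> complex" where
  "mu12 n i j = (if 2 \<le> i + j \<and> i + j \<le> n - 1 then bvec (i + j)
                 else if i = n \<and> j = n then bvec (n - 1) else (\<lambda>k. 0))"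

definition bilinear_on_vecs :: "nat \<Rightarrow> ((nat \<Rightarrow> complex) \<Rightarrow> (nat \<Rightarrow> complex) \<Rightarrow> nat \<Rightarrow> complex) \<Rightarrow> bool" where
  "bilinear_on_vecs n \<theta> \<longleftrightarrow>
     (\<forall>x\<in>vecs n. \<forall>y\<in>vecs n. \<theta> x y \<in> vecs n) \<and>
     (\<forall>a b. \<forall>x\<in>vecs n. \<forall>x'\<in>vecs n. \<forall>y\<in>vecs n.
        \<theta> (vadd (vscale a x) (vscale b x')) y = vadd (vscale a (\<theta> x y)) (vscale b (\<theta> x' y))) \<and>
     (\<forall>a b. \<forall>x\<in>vecs n. \<forall>y\<in>vecs n. \<forall>y'\<in>vecs n.
        \<theta> x (vadd (vscale a y) (vscale b y')) = vadd (vscale a (\<theta> x y)) (vscale b (\<theta> x y')))"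

text \<open>Z^2(P,P) for the algebra P = (span{e_1..e_n}, amult m n). Maps are only
  constrained on vecs n (their values outside are irrelevant).\<close>
definition Z2 :: "(nat \<Rightarrow> nat \<Rightarrow> nat \<Rightarrow> complex) \<Rightarrow> nat
    \<Rightarrow> ((nat \<Rightarrow> complex) \<Rightarrow> (nat \<Rightarrow> complex) \<Rightarrow> nat \<Rightarrow> complex) set" where
  "Z2 m n = {\<theta>. bilinear_on_vecs n \<theta> \<and>
     (\<forall>x\<in>vecs n. \<forall>y\<in>vecs n. \<theta> x y = vscale (-1) (\<theta> y x)) \<and>
     (\<forall>x\<in>vecs n. \<forall>y\<in>vecs n. \<forall>z\<in>vecs n.
        vadd (vadd (\<theta> (\<theta> x y) z) (\<theta> (\<theta> y z) x)) (\<theta> (\<theta> z x) y) = (\<lambda>k. 0)) \<and>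
     (\<forall>x\<in>vecs n. \<forall>y\<in>vecs n. \<forall>z\<in>vecs n.
        \<theta> (amult m n x y) z = vadd (amult m n (\<theta> x z) y) (amult m n x (\<theta> y z)))}"

definition Delta1n :: "nat \<Rightarrow> (nat \<Rightarrow> complex) \<Rightarrow> (nat \<Rightarrow> complex) \<Rightarrow> complex" where
  "Delta1n n x y = x 1 * y n - x n * y 1"

end

(* Both algebras are members of the family mu1 t n, in which e_n e_n = t e_{n-1}.
   Write T i j = \<theta>(e_i, e_j). For i + j \<le> n - 1 the Leibniz rule reads
   T (i + j) l = T i l e_j + e_i T j l, so a column T (-) l vanishes below n as soon as
   T 1 l annihilates the algebra; starting from T 1 1 = 0 and using skew-symmetry this kills
   every T i j with i, j < n. The relations e_n e_1 = 0 and e_n e_n = t e_{n-1} then force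
   c = T 1 n into the annihilator (span of e_{n-1} and e_n, or of e_{n-1} alone if t \<noteq> 0),
   which kills the rest of the last column, hence \<theta> = \<Delta>_{1,n} c. Conversely such a map is a
   cocycle: all products lie in the span of e_2, ..., e_{n-1}, where \<Delta>_{1,n} vanishes, and
   c annihilates everything. *)

theory Submission
  imports Defs
begin

lemma vecs_vadd_vscale: "x \<in> vecs n \<Longrightarrow> y \<in> vecs n \<Longrightarrow> vadd (vscale a x) (vscale b y) \<in> vecs n"
  by (simp add: vecs_def vadd_def vscale_def)

lemma zero_in_vecs: "(\<lambda>k. 0) \<in> vecs n"
  by (simp add: vecs_def)

lemma bvec_in_vecs: "i \<in> {1..n} \<Longrightarrow> bvec i \<in> vecs n"
  by (auto simp: vecs_def bvec_def)

definition linear_on_vecs :: "nat \<Rightarrow> ((nat \<Rightarrow> complex) \<Rightarrow> nat \<Rightarrow> complex) \<Rightarrow> bool" where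
  "linear_on_vecs n F \<longleftrightarrow> (\<forall>a b. \<forall>x\<in>vecs n. \<forall>x'\<in>vecs n.
     F (vadd (vscale a x) (vscale b x')) = vadd (vscale a (F x)) (vscale b (F x')))"

lemma linear_on_vecs_vscale:
  assumes "linear_on_vecs n F" "x \<in> vecs n"
  shows "F (vscale a x) = vscale a (F x)"
proof -
  have "F (vadd (vscale a x) (vscale 0 x)) = vadd (vscale a (F x)) (vscale 0 (F x))"
    using assms unfolding linear_on_vecs_def by blast
  then show ?thesis by (simp add: vadd_def vscale_def)
qed

lemma linear_on_vecs_zero: "linear_on_vecs n F \<Longrightarrow> F (\<lambda>k. 0) = (\<lambda>k. 0)"
  using linear_on_vecs_vscale[OF _ zero_in_vecs, of n F 0] by (simp add: vscale_def)

lemma linear_on_vecs_expansion: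
  assumes F: "linear_on_vecs n F" and x: "x \<in> vecs n"
  shows "F x = (\<lambda>k. \<Sum>i\<in>{1..n}. x i * F (bvec i) k)"
proof -
  have "F (\<lambda>k. if k \<in> S then x k else 0) = (\<lambda>k. \<Sum>i\<in>S. x i * F (bvec i) k)"
    if "S \<subseteq> {1..n}" for S
    using finite_subset[OF that finite_atLeastAtMost] that
  proof (induction S rule: finite_induct)
    case empty
    then show ?case using linear_on_vecs_zero[OF F] by simp
  next
    case (insert a S)
    let ?xS = "\<lambda>k. if k \<in> S then x k else 0"
    have "?xS \<in> vecs n" "bvec a \<in> vecs n"
      using x insert.prems by (auto simp: vecs_def bvec_def)
    then have "F (vadd (vscale 1 ?xS) (vscale (x a) (bvec a)))
        = vadd (vscale 1 (F ?xS)) (vscale (x a) (F (bvec a)))"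
      using F unfolding linear_on_vecs_def by blast
    moreover have "(\<lambda>k. if k \<in> insert a S then x k else 0) = vadd (vscale 1 ?xS) (vscale (x a) (bvec a))"
      using insert.hyps by (auto simp: vadd_def vscale_def bvec_def)
    ultimately show ?case
      using insert by (simp add: vadd_def vscale_def add.commute)
  qed
  moreover have "(\<lambda>k. if k \<in> {1..n} then x k else 0) = x"
    using x by (auto simp: vecs_def)
  ultimately show ?thesis
    by (metis subset_refl)
qed

lemma bilinear_on_vecs_linear_left:
  "bilinear_on_vecs n \<theta> \<Longrightarrow> y \<in> vecs n \<Longrightarrow> linear_on_vecs n (\<lambda>x. \<theta> x y)"
  unfolding bilinear_on_vecs_def linear_on_vecs_def by blast

lemma bilinear_on_vecs_linear_right:
  "bilinear_on_vecs n \<theta> \<Longrightarrow> x \<in> vecs n \<Longrightarrow> linear_on_vecs n (\<theta> x)"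
  unfolding bilinear_on_vecs_def linear_on_vecs_def by blast

lemma bilinear_on_vecs_expansion:
  assumes \<theta>: "bilinear_on_vecs n \<theta>" and "x \<in> vecs n" "y \<in> vecs n"
  shows "\<theta> x y = (\<lambda>k. \<Sum>i\<in>{1..n}. \<Sum>j\<in>{1..n}. x i * y j * \<theta> (bvec i) (bvec j) k)"
proof -
  have "\<theta> x y = (\<lambda>k. \<Sum>i\<in>{1..n}. x i * \<theta> (bvec i) y k)"
    using linear_on_vecs_expansion[OF bilinear_on_vecs_linear_left[OF \<theta>]] assms by blast
  also have "\<dots> = (\<lambda>k. \<Sum>i\<in>{1..n}. x i * (\<Sum>j\<in>{1..n}. y j * \<theta> (bvec i) (bvec j) k))"
    using linear_on_vecs_expansion[OF bilinear_on_vecs_linear_right[OF \<theta> bvec_in_vecs]] assms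
    by (intro ext sum.cong) auto
  finally show ?thesis
    by (simp add: sum_distrib_left mult.assoc mult.left_commute)
qed

lemma bilinear_on_vecs_eqI:
  assumes "bilinear_on_vecs n \<theta>" "bilinear_on_vecs n \<theta>'"
    and "\<And>i j. i \<in> {1..n} \<Longrightarrow> j \<in> {1..n} \<Longrightarrow> \<theta> (bvec i) (bvec j) = \<theta>' (bvec i) (bvec j)"
    and "x \<in> vecs n" "y \<in> vecs n"
  shows "\<theta> x y = \<theta>' x y"
  using assms by (simp add: bilinear_on_vecs_expansion)

lemma amult_bvec_left:
  "i \<in> {1..n} \<Longrightarrow> amult m n (bvec i) w = (\<lambda>k. \<Sum>j\<in>{1..n}. w j * m i j k)"
  unfolding amult_def bvec_def by (subst sum.swap) (simp add: if_distrib[of "\<lambda>c. c * _"] cong: if_cong)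

lemma amult_bvec_right:
  "j \<in> {1..n} \<Longrightarrow> amult m n w (bvec j) = (\<lambda>k. \<Sum>i\<in>{1..n}. w i * m i j k)"
  unfolding amult_def bvec_def
  by (simp add: if_distrib[of "\<lambda>c. _ * c"] if_distrib[of "\<lambda>c. c * _"] cong: if_cong)

lemma amult_bvec_bvec: "i \<in> {1..n} \<Longrightarrow> j \<in> {1..n} \<Longrightarrow> amult m n (bvec i) (bvec j) = m i j"
  by (simp add: amult_bvec_left) (simp add: bvec_def if_distrib[of "\<lambda>c. c * _"] cong: if_cong)

lemma amult_zero_left: "amult m n (\<lambda>k. 0) w = (\<lambda>k. 0)"
  by (simp add: amult_def)

lemma amult_zero_right: "amult m n w (\<lambda>k. 0) = (\<lambda>k. 0)"
  by (simp add: amult_def)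

lemma amult_commute: "(\<And>i j. m i j = m j i) \<Longrightarrow> amult m n x y = amult m n y x"
  unfolding amult_def by (subst sum.swap) (simp add: mult.commute)

lemma amult_in_vecs:
  "(\<And>i j. i \<in> {1..n} \<Longrightarrow> j \<in> {1..n} \<Longrightarrow> m i j \<in> vecs n) \<Longrightarrow> amult m n x y \<in> vecs n"
  by (auto simp: amult_def vecs_def)

lemma Z2_cong:
  assumes \<theta>': "\<theta>' \<in> Z2 m n"
    and eq: "\<And>x y. x \<in> vecs n \<Longrightarrow> y \<in> vecs n \<Longrightarrow> \<theta> x y = \<theta>' x y"
    and m: "\<And>i j. i \<in> {1..n} \<Longrightarrow> j \<in> {1..n} \<Longrightarrow> m i j \<in> vecs n"
  shows "\<theta> \<in> Z2 m n"
proof -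
  have bil: "bilinear_on_vecs n \<theta>'"
    and skew: "\<And>x y. x \<in> vecs n \<Longrightarrow> y \<in> vecs n \<Longrightarrow> \<theta>' x y = vscale (-1) (\<theta>' y x)"
    and jacobi: "\<And>x y z. x \<in> vecs n \<Longrightarrow> y \<in> vecs n \<Longrightarrow> z \<in> vecs n \<Longrightarrow>
      vadd (vadd (\<theta>' (\<theta>' x y) z) (\<theta>' (\<theta>' y z) x)) (\<theta>' (\<theta>' z x) y) = (\<lambda>k. 0)"
    and leibniz: "\<And>x y z. x \<in> vecs n \<Longrightarrow> y \<in> vecs n \<Longrightarrow> z \<in> vecs n \<Longrightarrow>
      \<theta>' (amult m n x y) z = vadd (amult m n (\<theta>' x z) y) (amult m n x (\<theta>' y z))"
    using \<theta>' unfolding Z2_def by blast+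
  then have closed: "\<theta>' x y \<in> vecs n" if "x \<in> vecs n" "y \<in> vecs n" for x y
    using that unfolding bilinear_on_vecs_def by blast
  have "bilinear_on_vecs n \<theta>"
    using bil unfolding bilinear_on_vecs_def by (simp add: eq vecs_vadd_vscale)
  moreover have "\<theta> x y = vscale (-1) (\<theta> y x)" if "x \<in> vecs n" "y \<in> vecs n" for x y
    using skew[OF that] by (simp add: eq that)
  moreover have "vadd (vadd (\<theta> (\<theta> x y) z) (\<theta> (\<theta> y z) x)) (\<theta> (\<theta> z x) y) = (\<lambda>k. 0)"
    if "x \<in> vecs n" "y \<in> vecs n" "z \<in> vecs n" for x y z
    using jacobi[OF that] by (simp add: eq closed that)
  moreover have "\<theta> (amult m n x y) z = vadd (amult m n (\<theta> x z) y) (amult m n x (\<theta> y z))"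
    if "x \<in> vecs n" "y \<in> vecs n" "z \<in> vecs n" for x y z
  proof -
    have "amult m n x y \<in> vecs n"
      using m by (rule amult_in_vecs)
    then show ?thesis
      using leibniz[OF that] by (simp add: eq that)
  qed
  ultimately show ?thesis
    unfolding Z2_def by blast
qed

definition Delta_map :: "nat \<Rightarrow> (nat \<Rightarrow> complex)
    \<Rightarrow> (nat \<Rightarrow> complex) \<Rightarrow> (nat \<Rightarrow> complex) \<Rightarrow> nat \<Rightarrow> complex" where
  "Delta_map n c x y = vscale (Delta1n n x y) c"

lemma Delta1n_bvec:
  "1 \<noteq> n \<Longrightarrow>
    Delta1n n (bvec i) (bvec j) = (if i = 1 \<and> j = n then 1 else if i = n \<and> j = 1 then -1 else 0)"
  by (auto simp: Delta1n_def bvec_def)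

lemma bilinear_on_vecs_Delta_map: "c \<in> vecs n \<Longrightarrow> bilinear_on_vecs n (Delta_map n c)"
  by (auto simp: bilinear_on_vecs_def Delta_map_def vecs_def vadd_def vscale_def Delta1n_def
      fun_eq_iff algebra_simps)

lemma Delta_map_skew: "Delta_map n c x y = vscale (-1) (Delta_map n c y x)"
  by (simp add: Delta_map_def vscale_def Delta1n_def fun_eq_iff algebra_simps)

text \<open>With \<open>c 1 = 0\<close>, \<open>\<theta>(\<theta>(x,y),z) = - c n * z 1 * \<Delta>(x,y) * c\<close>, and the cyclic sum of
  \<open>z 1 * \<Delta>(x,y)\<close> vanishes.\<close>
lemma Delta_map_jacobi:
  assumes "c 1 = 0"
  shows "vadd (vadd (Delta_map n c (Delta_map n c x y) z) (Delta_map n c (Delta_map n c y z) x))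
           (Delta_map n c (Delta_map n c z x) y) = (\<lambda>k. 0)"
  using assms by (simp add: Delta_map_def vadd_def vscale_def Delta1n_def fun_eq_iff algebra_simps)

definition mu1 :: "complex \<Rightarrow> nat \<Rightarrow> nat \<Rightarrow> nat \<Rightarrow> nat \<Rightarrow> complex" where
  "mu1 t n i j = (if 2 \<le> i + j \<and> i + j \<le> n - 1 then bvec (i + j)
                  else if i = n \<and> j = n then vscale t (bvec (n - 1)) else (\<lambda>k. 0))"

lemma mu11_eq_mu1: "mu11 n = mu1 0 n"
  by (simp add: fun_eq_iff mu11_def mu1_def vscale_def)

lemma mu12_eq_mu1: "mu12 n = mu1 1 n"
  by (simp add: fun_eq_iff mu12_def mu1_def vscale_def)

lemma mu1_diag: "mu1 t n n n = vscale t (bvec (n - 1))"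
  by (auto simp: mu1_def)

lemma mu1_commute: "mu1 t n i j = mu1 t n j i"
  by (auto simp: mu1_def add.commute)

lemma mu1_in_vecs: "2 \<le> n \<Longrightarrow> mu1 t n i j \<in> vecs n"
  by (auto simp: mu1_def vecs_def bvec_def vscale_def)

lemma amult_mu1_outside:
  assumes "3 \<le> n" "k \<notin> {2..n - 1}"
  shows "amult (mu1 t n) n x y k = 0"
  using assms by (auto simp: amult_def mu1_def bvec_def vscale_def intro!: sum.neutral)

lemma amult_mu1_bvec_1:
  assumes "2 \<le> n"
  shows "amult (mu1 t n) n v (bvec 1) = (\<lambda>k. if 2 \<le> k \<and> k \<le> n - 1 then v (k - 1) else 0)"
proof
  fix k
  have "amult (mu1 t n) n v (bvec 1) k = (\<Sum>i\<in>{1..n}. v i * mu1 t n i 1 k)"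
    using assms by (simp add: amult_bvec_right)
  also have "\<dots> = (\<Sum>i\<in>{1..n}. if i = k - 1 then (if 2 \<le> k \<and> k \<le> n - 1 then v (k - 1) else 0) else 0)"
    using assms by (intro sum.cong) (auto simp: mu1_def bvec_def)
  also have "\<dots> = (if 2 \<le> k \<and> k \<le> n - 1 then v (k - 1) else 0)"
    by (auto simp: sum.delta)
  finally show "amult (mu1 t n) n v (bvec 1) k = (if 2 \<le> k \<and> k \<le> n - 1 then v (k - 1) else 0)" .
qed

lemma amult_mu1_bvec_n:
  assumes "1 \<le> n"
  shows "amult (mu1 t n) n v (bvec n) = vscale (t * v n) (bvec (n - 1))"
proof
  fix k
  have "amult (mu1 t n) n v (bvec n) k = (\<Sum>i\<in>{1..n}. v i * mu1 t n i n k)"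
    using assms by (simp add: amult_bvec_right)
  also have "\<dots> = (\<Sum>i\<in>{1..n}. if i = n then t * v n * bvec (n - 1) k else 0)"
    by (intro sum.cong) (auto simp: mu1_def vscale_def)
  also have "\<dots> = vscale (t * v n) (bvec (n - 1)) k"
    using assms by (simp add: vscale_def)
  finally show "amult (mu1 t n) n v (bvec n) k = vscale (t * v n) (bvec (n - 1)) k" .
qed

text \<open>For \<open>3 < n\<close> this is exactly the annihilator of \<open>mu1 t n\<close>; only the inclusion
  \<open>amult_annihilator_mu1\<close> is proved.\<close>
definition annihilator_mu1 :: "complex \<Rightarrow> nat \<Rightarrow> (nat \<Rightarrow> complex) set" where
  "annihilator_mu1 t n = {c. (\<forall>k. k \<noteq> n - 1 \<and> k \<noteq> n \<longrightarrow> c k = 0) \<and> t * c n = 0}"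

lemma annihilator_mu1_vscale: "c \<in> annihilator_mu1 t n \<Longrightarrow> vscale a c \<in> annihilator_mu1 t n"
  by (auto simp: annihilator_mu1_def vscale_def)

lemma annihilator_mu1_in_vecs: "2 \<le> n \<Longrightarrow> c \<in> annihilator_mu1 t n \<Longrightarrow> c \<in> vecs n"
  by (auto simp: annihilator_mu1_def vecs_def)

lemma amult_annihilator_mu1:
  assumes "c \<in> annihilator_mu1 t n"
  shows "amult (mu1 t n) n c y = (\<lambda>k. 0)" and "amult (mu1 t n) n y c = (\<lambda>k. 0)"
proof -
  have "c i * y j * mu1 t n i j k = 0" if "i \<in> {1..n}" "j \<in> {1..n}" for i j k
    using assms that by (auto simp: annihilator_mu1_def mu1_def vscale_def)
  then show "amult (mu1 t n) n c y = (\<lambda>k. 0)"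
    unfolding amult_def by (auto intro!: sum.neutral)
  then show "amult (mu1 t n) n y c = (\<lambda>k. 0)"
    by (metis amult_commute mu1_commute)
qed

lemma Delta_map_in_Z2_mu1:
  assumes n: "3 < n" and c: "c \<in> annihilator_mu1 t n"
  shows "Delta_map n c \<in> Z2 (mu1 t n) n"
proof -
  have "c 1 = 0"
    using c n by (simp add: annihilator_mu1_def)
  moreover have "Delta_map n c (amult (mu1 t n) n x y) z
      = vadd (amult (mu1 t n) n (Delta_map n c x z) y) (amult (mu1 t n) n x (Delta_map n c y z))"
    for x y z
  proof -
    have "Delta1n n (amult (mu1 t n) n x y) z = 0"
      using n by (simp add: Delta1n_def amult_mu1_outside)
    then show ?thesis
      using amult_annihilator_mu1 annihilator_mu1_vscale[OF c]
      by (simp add: Delta_map_def vadd_def vscale_def)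
  qed
  moreover have "bilinear_on_vecs n (Delta_map n c)"
    using n c by (intro bilinear_on_vecs_Delta_map annihilator_mu1_in_vecs) auto
  ultimately show ?thesis
    unfolding Z2_def using Delta_map_jacobi Delta_map_skew by blast
qed

locale mu1_cocycle =
  fixes t :: complex and n :: nat
    and \<theta> :: "(nat \<Rightarrow> complex) \<Rightarrow> (nat \<Rightarrow> complex) \<Rightarrow> nat \<Rightarrow> complex"
  assumes n_gt_3: "3 < n" and cocycle: "\<theta> \<in> Z2 (mu1 t n) n"
begin

abbreviation T :: "nat \<Rightarrow> nat \<Rightarrow> nat \<Rightarrow> complex" where
  "T i j \<equiv> \<theta> (bvec i) (bvec j)"

lemma bilinear: "bilinear_on_vecs n \<theta>"
  using cocycle unfolding Z2_def by blast

lemma skew: "x \<in> vecs n \<Longrightarrow> y \<in> vecs n \<Longrightarrow> \<theta> x y = vscale (-1) (\<theta> y x)"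
  using cocycle unfolding Z2_def by blast

lemma leibniz:
  "x \<in> vecs n \<Longrightarrow> y \<in> vecs n \<Longrightarrow> z \<in> vecs n \<Longrightarrow>
    \<theta> (amult (mu1 t n) n x y) z
      = vadd (amult (mu1 t n) n (\<theta> x z) y) (amult (mu1 t n) n x (\<theta> y z))"
  using cocycle unfolding Z2_def by blast

lemma T_in_vecs: "i \<in> {1..n} \<Longrightarrow> j \<in> {1..n} \<Longrightarrow> T i j \<in> vecs n"
  using bilinear bvec_in_vecs unfolding bilinear_on_vecs_def by blast

lemma T_skew:
  assumes "i \<in> {1..n}" "j \<in> {1..n}"
  shows "T i j k = - T j i k"
  using skew[OF bvec_in_vecs[OF assms(1)] bvec_in_vecs[OF assms(2)]] by (simp add: vscale_def)

lemma T_diag: "i \<in> {1..n} \<Longrightarrow> T i i = (\<lambda>k. 0)"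
  using T_skew[of i i] by (simp add: fun_eq_iff)

lemma T_leibniz:
  assumes "i \<in> {1..n}" "j \<in> {1..n}" "l \<in> {1..n}"
  shows "\<theta> (mu1 t n i j) (bvec l)
    = vadd (amult (mu1 t n) n (T i l) (bvec j)) (amult (mu1 t n) n (bvec i) (T j l))"
  unfolding amult_bvec_bvec[OF assms(1,2), symmetric]
  by (rule leibniz[OF bvec_in_vecs[OF assms(1)] bvec_in_vecs[OF assms(2)] bvec_in_vecs[OF assms(3)]])

lemma T_sum_index:
  assumes "1 \<le> i" "1 \<le> j" "i + j \<le> n - 1" "l \<in> {1..n}"
  shows "T (i + j) l = vadd (amult (mu1 t n) n (T i l) (bvec j)) (amult (mu1 t n) n (bvec i) (T j l))"
  using T_leibniz[of i j l] assms by (simp add: mu1_def)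

lemma T_column_vanishes:
  assumes l: "l \<in> {1..n}"
    and first: "\<And>j. j \<in> {1..n} \<Longrightarrow> amult (mu1 t n) n (T 1 l) (bvec j) = (\<lambda>k. 0)"
  shows "2 \<le> i \<Longrightarrow> i \<le> n - 1 \<Longrightarrow> T i l = (\<lambda>k. 0)"
proof (induction i rule: nat_induct_at_least)
  case base
  have "amult (mu1 t n) n (bvec 1) (T 1 l) = amult (mu1 t n) n (T 1 l) (bvec 1)"
    by (rule amult_commute) (rule mu1_commute)
  then show ?case
    using T_sum_index[of 1 1 l] first[of 1] l base n_gt_3 by (simp add: vadd_def numeral_2_eq_2)
next
  case (Suc i)
  then show ?case
    using T_sum_index[of 1 i l] first[of i] l by (simp add: amult_zero_right vadd_def)
qed

lemma T_low:
  assumes "i \<in> {1..n - 1}" "j \<in> {1..n - 1}"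
  shows "T i j = (\<lambda>k. 0)"
proof -
  have column: "T i l = (\<lambda>k. 0)" if "l \<in> {1..n}" "T 1 l = (\<lambda>k. 0)" "i \<in> {1..n - 1}" for i l
    using T_column_vanishes[of l i] that by (cases "i = 1") (auto simp: amult_zero_left)
  have "T j 1 = (\<lambda>k. 0)"
    using column[of 1 j] T_diag[of 1] assms(2) by auto
  then have "T 1 j = (\<lambda>k. 0)"
    using T_skew[of 1 j] assms(2) by (auto simp: fun_eq_iff)
  then show ?thesis
    using column[of j i] assms by auto
qed

lemma T_n1_annihilator: "T n 1 \<in> annihilator_mu1 t n"
proof -
  have in_range: "1 \<in> {1..n}" "n \<in> {1..n}" "n - 1 \<in> {1..n}"
    using n_gt_3 by auto
  have \<theta>_zero: "\<theta> (\<lambda>k. 0) (bvec 1) = (\<lambda>k. 0)"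
    using bilinear_on_vecs_linear_left[OF bilinear bvec_in_vecs[OF in_range(1)]]
    by (rule linear_on_vecs_zero)
  txt \<open>From \<open>e_n e_1 = 0\<close>: multiplication by \<open>e_1\<close> is a shift, so \<open>T n 1\<close> vanishes
    below \<open>n - 1\<close>.\<close>
  have "mu1 t n n 1 = (\<lambda>k. 0)"
    using n_gt_3 by (auto simp: mu1_def)
  then have "amult (mu1 t n) n (T n 1) (bvec 1) = (\<lambda>k. 0)"
    using T_leibniz[of n 1 1] T_diag[of 1] in_range \<theta>_zero by (simp add: amult_zero_right vadd_def)
  then have shifted: "(\<lambda>k. if 2 \<le> k \<and> k \<le> n - 1 then T n 1 (k - 1) else 0) = (\<lambda>k. 0)"
    using amult_mu1_bvec_1[of n t "T n 1"] n_gt_3 by simp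
  have low: "T n 1 k = 0" if "1 \<le> k" "k \<le> n - 2" for k
    using fun_cong[OF shifted, of "k + 1"] that by (simp split: if_splits)
  txt \<open>From \<open>e_n e_n = t e_{n-1}\<close>: the \<open>e_{n-1}\<close>-coordinate gives
    \<open>2 t (T n 1 n) = 0\<close>.\<close>
  have "\<theta> (vscale t (bvec (n - 1))) (bvec 1) = vscale t (T (n - 1) 1)"
    using bilinear_on_vecs_linear_left[OF bilinear bvec_in_vecs[OF in_range(1)]]
      bvec_in_vecs[OF in_range(3)]
    by (rule linear_on_vecs_vscale)
  also have "\<dots> = (\<lambda>k. 0)"
    using T_low[of "n - 1" 1] n_gt_3 by (simp add: vscale_def)
  finally have "vadd (amult (mu1 t n) n (T n 1) (bvec n)) (amult (mu1 t n) n (bvec n) (T n 1)) = (\<lambda>k. 0)"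
    using T_leibniz[of n n 1] in_range by (simp add: mu1_diag)
  moreover have "amult (mu1 t n) n (bvec n) (T n 1) = amult (mu1 t n) n (T n 1) (bvec n)"
    by (rule amult_commute) (rule mu1_commute)
  ultimately have
    "vadd (vscale (t * T n 1 n) (bvec (n - 1))) (vscale (t * T n 1 n) (bvec (n - 1))) = (\<lambda>k. 0)"
    using amult_mu1_bvec_n[of n t "T n 1"] n_gt_3 by simp
  from fun_cong[OF this, of "n - 1"] have top: "t * T n 1 n = 0"
    by (simp add: vadd_def vscale_def bvec_def)
  have outside: "T n 1 k = 0" if "k \<notin> {1..n}" for k
    using T_in_vecs[of n 1] in_range that by (simp add: vecs_def)
  show ?thesis
    unfolding annihilator_mu1_def
  proof (intro CollectI conjI allI impI)
    fix k
    assume "k \<noteq> n - 1 \<and> k \<noteq> n"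
    then consider "k \<notin> {1..n}" | "1 \<le> k" "k \<le> n - 2"
      by fastforce
    then show "T n 1 k = 0"
      by cases (blast intro: outside low)+
  qed (rule top)
qed

lemma T_1n_annihilator: "T 1 n \<in> annihilator_mu1 t n"
proof -
  have "T 1 n = vscale (-1) (T n 1)"
    using T_skew[of 1 n] n_gt_3 by (simp add: vscale_def fun_eq_iff)
  then show ?thesis
    using T_n1_annihilator by (simp add: annihilator_mu1_vscale)
qed

lemma T_last_column: "i \<in> {1..n} \<Longrightarrow> T i n = Delta_map n (T 1 n) (bvec i) (bvec n)"
proof -
  assume i: "i \<in> {1..n}"
  have "1 \<noteq> n"
    using n_gt_3 by simp
  consider "i = 1" | "i = n" | "2 \<le> i" "i \<le> n - 1"
    using i by fastforce
  then show ?thesis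
  proof cases
    case 1
    then show ?thesis using \<open>1 \<noteq> n\<close> by (simp add: Delta_map_def Delta1n_bvec vscale_def)
  next
    case 2
    then show ?thesis using i \<open>1 \<noteq> n\<close> by (simp add: Delta_map_def Delta1n_bvec vscale_def T_diag)
  next
    case 3
    have "T i n = (\<lambda>k. 0)"
      using T_column_vanishes[of n i] amult_annihilator_mu1(1)[OF T_1n_annihilator] n_gt_3 3 by auto
    then show ?thesis using 3 \<open>1 \<noteq> n\<close> by (simp add: Delta_map_def Delta1n_bvec vscale_def)
  qed
qed

lemma T_eq_Delta_map:
  assumes i: "i \<in> {1..n}" and j: "j \<in> {1..n}"
  shows "T i j = Delta_map n (T 1 n) (bvec i) (bvec j)"
proof -
  have "1 \<noteq> n"
    using n_gt_3 by simp
  consider "j = n" | "i \<in> {1..n - 1}" "j \<in> {1..n - 1}" | "i = n" "j \<in> {1..n - 1}"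
    using i j by fastforce
  then show ?thesis
  proof cases
    case 1
    then show ?thesis using T_last_column[OF i] by simp
  next
    case 2
    then show ?thesis using T_low \<open>1 \<noteq> n\<close> by (auto simp: Delta_map_def Delta1n_bvec vscale_def)
  next
    case 3
    then have "T i j = vscale (-1) (T j i)"
      using T_skew[OF i j] by (simp add: vscale_def fun_eq_iff)
    also have "\<dots> = vscale (-1) (Delta_map n (T 1 n) (bvec j) (bvec i))"
      using T_last_column[OF j] 3 by simp
    also have "\<dots> = Delta_map n (T 1 n) (bvec i) (bvec j)"
      by (rule Delta_map_skew[symmetric])
    finally show ?thesis .
  qed
qed

lemma eq_Delta_map:
  assumes "x \<in> vecs n" "y \<in> vecs n"
  shows "\<theta> x y = Delta_map n (T 1 n) x y"
proof (rule bilinear_on_vecs_eqI[OF bilinear _ _ assms])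
  show "bilinear_on_vecs n (Delta_map n (T 1 n))"
    using n_gt_3 T_1n_annihilator by (intro bilinear_on_vecs_Delta_map annihilator_mu1_in_vecs) auto
qed (rule T_eq_Delta_map)

end

theorem Z2_mu1_iff:
  assumes "3 < n"
  shows "\<theta> \<in> Z2 (mu1 t n) n \<longleftrightarrow>
    (\<exists>c\<in>annihilator_mu1 t n. \<forall>x\<in>vecs n. \<forall>y\<in>vecs n. \<theta> x y = Delta_map n c x y)"
proof
  assume "\<theta> \<in> Z2 (mu1 t n) n"
  then interpret mu1_cocycle t n \<theta>
    using assms by unfold_locales
  show "\<exists>c\<in>annihilator_mu1 t n. \<forall>x\<in>vecs n. \<forall>y\<in>vecs n. \<theta> x y = Delta_map n c x y"
    using T_1n_annihilator eq_Delta_map by blast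
next
  assume "\<exists>c\<in>annihilator_mu1 t n. \<forall>x\<in>vecs n. \<forall>y\<in>vecs n. \<theta> x y = Delta_map n c x y"
  then obtain c where "c \<in> annihilator_mu1 t n" "\<forall>x\<in>vecs n. \<forall>y\<in>vecs n. \<theta> x y = Delta_map n c x y"
    by blast
  moreover have "mu1 t n i j \<in> vecs n" for i j
    using assms by (intro mu1_in_vecs) simp
  ultimately show "\<theta> \<in> Z2 (mu1 t n) n"
    using Z2_cong[OF Delta_map_in_Z2_mu1[OF assms]] by blast
qed

lemma annihilator_mu1_eq:
  assumes "1 \<le> n"
  shows "annihilator_mu1 t n = {vadd (vscale \<alpha> (bvec (n - 1))) (vscale \<beta> (bvec n)) | \<alpha> \<beta>. t * \<beta> = 0}"
proof (intro equalityI subsetI)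
  fix c
  assume c: "c \<in> annihilator_mu1 t n"
  then have "c = vadd (vscale (c (n - 1)) (bvec (n - 1))) (vscale (c n) (bvec n))"
    using assms by (auto simp: annihilator_mu1_def vadd_def vscale_def bvec_def fun_eq_iff)
  with c show "c \<in> {vadd (vscale \<alpha> (bvec (n - 1))) (vscale \<beta> (bvec n)) | \<alpha> \<beta>. t * \<beta> = 0}"
    unfolding annihilator_mu1_def by blast
qed (use assms in \<open>auto simp: annihilator_mu1_def vadd_def vscale_def bvec_def split: if_splits\<close>)

lemma Delta_map_explicit:
  "Delta_map n (vadd (vscale \<alpha> (bvec (n - 1))) (vscale \<beta> (bvec n))) x y
    = vadd (vscale (\<alpha> * Delta1n n x y) (bvec (n - 1))) (vscale (\<beta> * Delta1n n x y) (bvec n))"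
  by (simp add: Delta_map_def vadd_def vscale_def fun_eq_iff algebra_simps)

corollary Z2_mu1_explicit:
  assumes "3 < n"
  shows "\<theta> \<in> Z2 (mu1 t n) n \<longleftrightarrow>
    (\<exists>\<alpha> \<beta>. t * \<beta> = 0 \<and> (\<forall>x\<in>vecs n. \<forall>y\<in>vecs n.
       \<theta> x y = vadd (vscale (\<alpha> * Delta1n n x y) (bvec (n - 1)))
                     (vscale (\<beta> * Delta1n n x y) (bvec n))))"
proof -
  have "\<theta> \<in> Z2 (mu1 t n) n \<longleftrightarrow>
      (\<exists>c\<in>annihilator_mu1 t n. \<forall>x\<in>vecs n. \<forall>y\<in>vecs n. \<theta> x y = Delta_map n c x y)"
    using assms by (rule Z2_mu1_iff)
  also have "\<dots> \<longleftrightarrow> (\<exists>\<alpha> \<beta>. t * \<beta> = 0 \<and> (\<forall>x\<in>vecs n. \<forall>y\<in>vecs n.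
      \<theta> x y = Delta_map n (vadd (vscale \<alpha> (bvec (n - 1))) (vscale \<beta> (bvec n))) x y))"
    using assms by (simp add: annihilator_mu1_eq) blast
  finally show ?thesis
    by (simp only: Delta_map_explicit)
qed

theorem lemma3p7:
  fixes n :: nat
  assumes "n > 3"
  shows "(\<forall>\<theta>. \<theta> \<in> Z2 (mu11 n) n \<longleftrightarrow>
            (\<exists>\<alpha> \<beta>. \<forall>x\<in>vecs n. \<forall>y\<in>vecs n.
               \<theta> x y = vadd (vscale (\<alpha> * Delta1n n x y) (bvec (n - 1)))
                             (vscale (\<beta> * Delta1n n x y) (bvec n))))
       \<and> (\<forall>\<theta>. \<theta> \<in> Z2 (mu12 n) n \<longleftrightarrow>
            (\<exists>\<alpha>. \<forall>x\<in>vecs n. \<forall>y\<in>vecs n.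
               \<theta> x y = vscale (\<alpha> * Delta1n n x y) (bvec (n - 1))))"
  unfolding mu11_eq_mu1 mu12_eq_mu1 Z2_mu1_explicit[OF assms]
  by (simp add: vadd_def vscale_def)

end
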